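(* For every $N\ge 2$, the median distance $Md_N$ and the average distance $\bar d_N=\frac{N+1}{3}$ of the path (chain) on $N$ nodes satisfy $Md_N\le \bar d_N$, with equality if and only if $N\in\{2,5,8,11\}$.
   Context: The path on $N$ nodes has exactly $N-j$ unordered pairs of nodes at (shortest-path) distance $j$, $j=1,\dots,N-1$. The median distance is the median of the multiset of these $N(N-1)/2$ distances (the average of the two middle values if this number is even); the average distance is the arithmetic mean of that multiset. *)

theory Defs
  imports Complex_Main
begin

text \<open>Path graph on N nodes: nodes 0..N-1, edges between i and i+1; the
shortest-path distance between nodes i and j is |i - j|.\<close>

definition path_dist :: "nat \<Rightarrow> nat \<Rightarrow> nat" where
  "path_dist i j = (if i \<le> j then j - i else i - j)"

definition path_distances :: "nat \<Rightarrow> nat list" where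
  "path_distances N = [path_dist i j. i \<leftarrow> [0..<N], j \<leftarrow> [0..<N], i < j]"

definition median :: "real list \<Rightarrow> real" where
  "median xs = (let ys = sort xs; m = length xs in
     if odd m then ys ! (m div 2)
     else (ys ! (m div 2 - 1) + ys ! (m div 2)) / 2)"

definition mean :: "real list \<Rightarrow> real" where
  "mean xs = sum_list xs / real (length xs)"

definition median_distance :: "nat \<Rightarrow> real" where
  "median_distance N = median (map real (path_distances N))"

definition average_distance :: "nat \<Rightarrow> real" where
  "average_distance N = mean (map real (path_distances N))"

end

theory Submission
  imports Defs
begin

text \<open>
  Adding a node to the path adds one pair at each distance \<open>1, \<dots>, N\<close>, which gives the number
  of pairs, the sum of all distances and the number of distances at most \<open>k\<close> in closed form.
  The average is therefore \<open>(N + 1) / 3\<close>. For \<open>N \<ge> 12\<close> more than half of the distances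
  are at most \<open>N div 3\<close>, so the median is at most \<open>N div 3 < (N + 1) / 3\<close>; the remaining
  cases \<open>2 \<le> N < 12\<close> are computed.
\<close>

lemma path_distances_0 [simp]: "path_distances 0 = []"
  by (simp add: path_distances_def)

lemma path_distances_Suc: "path_distances (Suc N) = [1..<Suc N] @ path_distances N"
proof -
  have row: "[path_dist i j. j \<leftarrow> [0..<N], i < j] = [1..<N - i]" for i N
    by (induction N) (auto simp: path_dist_def Suc_diff_le)
  have "path_distances N = concat (map (\<lambda>i. [1..<N - i]) [0..<N])" for N
    unfolding path_distances_def row ..
  then show ?thesis
    by (simp add: upt_conv_Cons map_Suc_upt[symmetric] comp_def del: upt_Suc)
qed

lemma set_path_distances: "set (path_distances N) = {1..<N}"
  by (induction N) (auto simp: path_distances_Suc simp del: upt_Suc)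

lemma length_path_distances: "2 * length (path_distances N) = N * (N - 1)"
  by (induction N) (auto simp: path_distances_Suc algebra_simps)

lemma sum_list_path_distances: "6 * sum_list (path_distances N) = (N - 1) * N * (N + 1)"
proof (induction N)
  case (Suc N)
  have "2 * sum_list [1..<Suc N] = N * (N + 1)"
    by (induction N) simp_all
  with Suc show ?case
    by (cases N) (simp_all add: path_distances_Suc algebra_simps)
qed simp

lemma length_filter_path_distances_le:
  assumes "k \<le> N"
  shows "2 * length (filter (\<lambda>d. d \<le> k) (path_distances N)) + k * (k + 1) = 2 * k * N"
  using assms
proof (induction N rule: dec_induct)
  case base
  have "filter (\<lambda>d. d \<le> k) (path_distances k) = path_distances k"
    by (simp add: set_path_distances)
  then show ?case
    using length_path_distances[of k] by (cases k) (simp_all add: algebra_simps)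
next
  case (step n)
  have "filter (\<lambda>d. d \<le> k) [1..<Suc n] = [1..<Suc k]"
  proof -
    have "[1..<Suc n] = [1..<Suc k] @ [Suc k..<Suc n]"
      using upt_add_eq_append[of 1 "Suc k" "n - k"] step.hyps(1) by (simp del: upt_Suc)
    then show ?thesis
      by (auto simp: filter_id_conv filter_empty_conv simp del: upt_Suc)
  qed
  with step show ?case
    by (simp add: path_distances_Suc algebra_simps)
qed

lemma average_distance_eq:
  assumes "2 \<le> N"
  shows "average_distance N = (real N + 1) / 3"
proof -
  have "6 * sum_list (path_distances N) = 2 * length (path_distances N) * (N + 1)"
    unfolding sum_list_path_distances length_path_distances by (simp add: ac_simps)
  then have "3 * sum_list (path_distances N) = length (path_distances N) * (N + 1)"
    by simp
  then have "3 * real (sum_list (path_distances N)) = real (length (path_distances N)) * (real N + 1)"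
    by (metis of_nat_1 of_nat_add of_nat_mult of_nat_numeral)
  moreover have "length (path_distances N) \<noteq> 0"
    using length_path_distances[of N] assms by auto
  ultimately show ?thesis
    unfolding average_distance_def mean_def by (simp add: sum_list_of_nat field_simps)
qed

lemma sorted_nth_le_if_less_length_filter:
  fixes ys :: "'a::linorder list"
  assumes "sorted ys" "p < length (filter (\<lambda>y. y \<le> a) ys)"
  shows "ys ! p \<le> a"
  using assms
proof (induction ys arbitrary: p)
  case (Cons y ys)
  show ?case
  proof (cases "y \<le> a")
    case True
    with Cons show ?thesis by (cases p) auto
  next
    case False
    with Cons.prems have "filter (\<lambda>y. y \<le> a) (y # ys) = []"
      by (auto simp: filter_empty_conv)
    with Cons.prems show ?thesis by simp
  qed
qed simp

lemma median_le_if_majority_le: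
  fixes xs :: "real list"
  assumes "length xs < 2 * length (filter (\<lambda>x. x \<le> a) xs)"
  shows "median xs \<le> a"
proof -
  let ?ys = "sort xs" and ?m = "length xs"
  have "?m div 2 < length (filter (\<lambda>x. x \<le> a) ?ys)"
    using assms by (simp add: filter_sort)
  then have mid: "?ys ! (?m div 2) \<le> a"
    by (simp add: sorted_nth_le_if_less_length_filter)
  have "0 < ?m"
    using assms length_filter_le[of "\<lambda>x. x \<le> a" xs] by linarith
  then have "?m div 2 < ?m"
    by simp
  then have "?ys ! (?m div 2 - 1) \<le> ?ys ! (?m div 2)"
    by (intro sorted_nth_mono) auto
  with mid show ?thesis
    unfolding median_def Let_def by auto
qed

lemma majority_path_distances_le_div3:
  assumes "12 \<le> N"
  shows "length (path_distances N) < 2 * length (filter (\<lambda>d. d \<le> N div 3) (path_distances N))"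
proof -
  define k where "k = N div 3"
  have "4 \<le> k"
    using assms by (simp add: k_def)
  then have "3 * k + 2 < k * k"
    using mult_le_mono1[OF \<open>4 \<le> k\<close>, of k] by linarith
  moreover have "N = 3 * k \<or> N = 3 * k + 1 \<or> N = 3 * k + 2"
    unfolding k_def by linarith
  ultimately have "N * N + 2 * k * (k + 1) < 4 * k * N + N"
    using \<open>4 \<le> k\<close> by (auto simp: algebra_simps)
  moreover have "2 * length (path_distances N) + N = N * N"
    using length_path_distances[of N] by (cases N) simp_all
  ultimately show ?thesis
    using length_filter_path_distances_le[of k N] by (simp add: k_def algebra_simps)
qed

lemma median_distance_lt:
  assumes "12 \<le> N"
  shows "median_distance N < (real N + 1) / 3"
proof -
  have "median (map real (path_distances N)) \<le> real (N div 3)"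
    using majority_path_distances_le_div3[OF assms]
    by (intro median_le_if_majority_le) (simp add: filter_map comp_def)
  moreover have "3 * real (N div 3) \<le> real N"
    by linarith
  ultimately show ?thesis
    unfolding median_distance_def by (simp add: field_simps)
qed

lemma median_distance_small_cases:
  "list_all (\<lambda>N. median_distance N \<le> (real N + 1) / 3 \<and>
     (median_distance N = (real N + 1) / 3 \<longleftrightarrow> N \<in> {2, 5, 8, 11})) [2..<12]"
  by code_simp

theorem mainTheorem10:
  fixes N :: nat
  assumes "N \<ge> 2"
  shows "average_distance N = (real N + 1) / 3
       \<and> median_distance N \<le> average_distance N
       \<and> (median_distance N = average_distance N \<longleftrightarrow> N \<in> {2, 5, 8, 11})"
proof -
  have "median_distance N \<le> (real N + 1) / 3 \<and>
    (median_distance N = (real N + 1) / 3 \<longleftrightarrow> N \<in> {2, 5, 8, 11})"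
  proof (cases "N < 12")
    case True
    with assms have "N \<in> set [2..<12]"
      unfolding set_upt by simp
    with median_distance_small_cases show ?thesis
      unfolding list_all_iff by blast
  next
    case False
    then show ?thesis
      using median_distance_lt[of N] by auto
  qed
  then show ?thesis
    unfolding average_distance_eq[OF assms] by blast
qed

end
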